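(* Let $0\le r\le n$, $A\in\mathcal{A}_{n+1,r+1}$, and fix a tiling of $\Gamma(X(A))$. At any stage of the fusion-exchange algorithm applied to $A$, if an edge $e$ carries a nonempty label $L$ and $x=L_{\max}$, then $e$ lies in the $x$-strip.
   Context: Words and diagrams. For $0\le r\le n$ let $B_n^r$ be the set of words $X\in\{H,L,0\}^n$ with exactly $r$ letters $L$. If $X$ has $k$ letters $H$, $r$ letters $L$ and $\ell$ letters $0$, its rhombic diagram $\Gamma(X)$ is the closed region bounded by two paths of unit steps, using the directions west (horizontal), south (vertical) and southwest (diagonal: a fixed unit vector strictly between west and south), both going from a point $P$ to a point $Q$: the northwest boundary consists of $\ell$ west steps, then $r$ southwest steps, then $k$ south steps; the southeast boundary is obtained by reading $X$ left to right and taking a west step for each $0$, a southwest step for each $L$, a south step for each $H$. A tiling of $\Gamma(X)$ is a tiling by unit rhombi of three kinds: squares (horizontal and vertical edges), tall rhombi (vertical and diagonal edges), short rhombi (horizontal and diagonal edges). A west-strip (resp. north-strip, northwest-strip) is a maximal set of tiles connected through shared vertical (resp. horizontal, diagonal) edges; each runs from an edge of the southeast boundary to an edge of the northwest boundary, and each edge of the tiling lies in exactly one strip, of the type of its direction. Each tile has two edges on its lower-right side: its east edge (vertical for squares and tall rhombi, diagonal for short rhombi) and its south edge (horizontal for squares and short rhombi, diagonal for tall rhombi); the parallel edges on its upper-left side are its west and north edges. Assemblées. An assemblée of size $(m,s)$ is a collection of $s$ nonempty, pairwise disjoint, linearly ordered sets (blocks) with union $\{1,\dots,m\}$; the last element of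 a block is its block-end. Blocks are listed in the canonical order with decreasing block-ends, and the assemblée is identified with the concatenated word. $\mathcal{A}_{m,s}$ is the set of these. For $A\in\mathcal{A}_{n+1,r+1}$ with block-ends $b_1>\dots>b_{r+1}$, a non-block-end element $x$ is an increase if $x+1$ appears to the right of $x$ in $A$, and a decrease otherwise (so $n+1$, if not a block-end, is a decrease). $X(A)\in B_n^r$ is obtained from $A$ by deleting its last letter $b_{r+1}$ and replacing each increase by $H$, each decrease by $0$ and each remaining block-end by $L$. Fusion-exchange algorithm. A label is a finite, possibly empty, set of consecutive integers; for a nonempty label $L$, $L_{\max}$ is its largest element; for labels $E,S$ write $E\succ S$ if both are nonempty and $\min E=\max S+1$. Given $A\in\mathcal{A}_{n+1,r+1}$ and a tiling of $\Gamma(X(A))$: initially the southeast boundary edges, in order from $P$ to $Q$, receive the singleton labels of the letters of $A$ from left to right, $b_{r+1}$ omitted. Step: choose a tile whose east and south edges are labeled, say by $E$ and $S$, and whose west and north edges are not. (R I) If $E\succ S$ and the south edge is horizontal: west edge gets $E\cup S$, north edge gets $\emptyset$, place $\alpha$ in the tile. (R II) If $S\succ E$ and the east edge is vertical: north edge gets $E\cup S$, west edge gets $\emptyset$, place $\beta$. (R III) Otherwise: west edge gets $E$, north edge gets $S$, and place $q$ if $E\ne\emptyset$ and $S\ne\emptyset$. Repeat until every edge is labeled. For a letter $x\neq b_{r+1}$ of $A$, the $x$-strip is the strip containing the southeast boundary edge initially labeled $\{x\}$. *)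

theory Defs
  imports Main
begin

text \<open>An assemblee of size (m,s) is represented by its list of blocks in canonical
order (decreasing block-ends); each block is a nonempty list (its linear order).
The concatenated word is concat A.\<close>

definition assemblee :: "nat \<Rightarrow> nat \<Rightarrow> nat list list \<Rightarrow> bool" where
  "assemblee m s A \<longleftrightarrow>
     length A = s \<and> (\<forall>B\<in>set A. B \<noteq> []) \<and>
     distinct (concat A) \<and> set (concat A) = {1..m} \<and>
     sorted_wrt (>) (map last A)"

definition block_ends :: "nat list list \<Rightarrow> nat set" where
  "block_ends A = set (map last A)"

text \<open>Step directions: west (letter 0), southwest/diagonal (letter L), south (letter H).\<close>
datatype dir = dW | dSW | dS

text \<open>The word X(A), with letters encoded as directions (0 = dW, L = dSW, H = dS).
Position i < n carries the letter (concat A ! i).\<close>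
definition Xword :: "nat list list \<Rightarrow> dir list" where
  "Xword A = (let w = concat A in
     map (\<lambda>i. if w ! i \<in> block_ends A then dSW
               else if (\<exists>j. i < j \<and> j < length w \<and> w ! j = w ! i + 1) then dS
               else dW) [0..<length w - 1])"

definition nw_word :: "dir list \<Rightarrow> dir list" where
  "nw_word X = replicate (count_list X dW) dW @ replicate (count_list X dSW) dSW
              @ replicate (count_list X dS) dS"

text \<open>Vertices are recorded by the numbers of west, southwest and south unit steps
needed to reach them from P (for a generic diagonal vector this determines the
planar point uniquely).\<close>
type_synonym vertex = "nat \<times> nat \<times> nat"

definition pos :: "dir list \<Rightarrow> vertex" where
  "pos w = (count_list w dW, count_list w dSW, count_list w dS)"

fun mv :: "vertex \<Rightarrow> dir \<Rightarrow> vertex" where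
  "mv (i,j,k) dW = (Suc i, j, k)"
| "mv (i,j,k) dSW = (i, Suc j, k)"
| "mv (i,j,k) dS = (i, j, Suc k)"

text \<open>An edge is given by its endpoint nearer to P and its direction.\<close>
type_synonym edge = "vertex \<times> dir"

definition path_edge :: "dir list \<Rightarrow> nat \<Rightarrow> edge" where
  "path_edge w i = (pos (take i w), w ! i)"

text \<open>A tile is given by its corner nearest P and the directions (a,b) of its
lower-right side read from that corner: east edge in direction a, then south edge
in direction b. Squares: (dS,dW); tall rhombi: (dS,dSW); short rhombi: (dSW,dW).\<close>
type_synonym tile = "vertex \<times> dir \<times> dir"

definition tile_types :: "(dir \<times> dir) set" where
  "tile_types = {(dS,dW), (dS,dSW), (dSW,dW)}"

definition east_edge :: "tile \<Rightarrow> edge" where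
  "east_edge t = (case t of (v,a,b) \<Rightarrow> (v, a))"
definition south_edge :: "tile \<Rightarrow> edge" where
  "south_edge t = (case t of (v,a,b) \<Rightarrow> (mv v a, b))"
definition north_edge :: "tile \<Rightarrow> edge" where
  "north_edge t = (case t of (v,a,b) \<Rightarrow> (v, b))"
definition west_edge :: "tile \<Rightarrow> edge" where
  "west_edge t = (case t of (v,a,b) \<Rightarrow> (mv v b, a))"

text \<open>Elementary move: a boundary path w passing along the lower-right side of tile t
is replaced by the path passing along its upper-left side.\<close>
definition flip :: "dir list \<Rightarrow> dir list \<Rightarrow> tile \<Rightarrow> bool" where
  "flip w w' t \<longleftrightarrow> (\<exists>i a b. (a,b) \<in> tile_types \<and> Suc i < length w \<and>
      w ! i = a \<and> w ! Suc i = b \<and> w' = w[i := b, Suc i := a] \<and>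
      t = (pos (take i w), a, b))"

text \<open>A (rhombus) tiling of Gamma(X): a set of tiles which can be placed one by one,
starting from the southeast boundary and ending at the northwest boundary.\<close>
definition is_tiling :: "dir list \<Rightarrow> tile set \<Rightarrow> bool" where
  "is_tiling X T \<longleftrightarrow> (\<exists>ws ts. length ws = Suc (length ts) \<and> ws ! 0 = X \<and>
      last ws = nw_word X \<and> (\<forall>i < length ts. flip (ws ! i) (ws ! Suc i) (ts ! i)) \<and>
      distinct ts \<and> T = set ts)"

definition strip_adj :: "tile set \<Rightarrow> edge \<Rightarrow> edge \<Rightarrow> bool" where
  "strip_adj T e e' \<longleftrightarrow> (\<exists>t\<in>T. {e, e'} = {east_edge t, west_edge t} \<or>
                                  {e, e'} = {south_edge t, north_edge t})"

definition same_strip :: "tile set \<Rightarrow> edge \<Rightarrow> edge \<Rightarrow> bool" where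
  "same_strip T = (strip_adj T)\<^sup>*\<^sup>*"

type_synonym label = "nat set"

definition lsucc :: "label \<Rightarrow> label \<Rightarrow> bool" where
  "lsucc E S \<longleftrightarrow> E \<noteq> {} \<and> S \<noteq> {} \<and> Min E = Max S + 1"

definition init_lab :: "nat list list \<Rightarrow> edge \<Rightarrow> label option" where
  "init_lab A = map_of (map (\<lambda>i. (path_edge (Xword A) i, {concat A ! i}))
                            [0..<length (Xword A)])"

definition fe_step :: "tile set \<Rightarrow> (edge \<Rightarrow> label option) \<Rightarrow> (edge \<Rightarrow> label option) \<Rightarrow> bool" where
  "fe_step T lab lab' \<longleftrightarrow> (\<exists>t\<in>T. \<exists>E S.
     lab (east_edge t) = Some E \<and> lab (south_edge t) = Some S \<and>
     lab (west_edge t) = None \<and> lab (north_edge t) = None \<and>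
     lab' = (if lsucc E S \<and> snd (snd t) = dW
               then lab(west_edge t := Some (E \<union> S), north_edge t := Some {})
             else if lsucc S E \<and> fst (snd t) = dS
               then lab(north_edge t := Some (E \<union> S), west_edge t := Some {})
             else lab(west_edge t := Some E, north_edge t := Some S)))"

end

theory Submission
  imports Defs
begin

text \<open>Every nonempty label records in its maximum the letter whose strip it travels in.
Rule III moves each label across its tile, i.e. along its own strip. In a fusion
E \<succ> S every element of S is below every element of E, so the union keeps the
maximum of E and is placed on the edge opposite to E's (rule I) or, symmetrically,
keeps the maximum of S and is placed opposite to S's edge (rule II).\<close>

definition max_tracked :: "tile set \<Rightarrow> (nat \<times> edge) set \<Rightarrow> edge \<Rightarrow> label \<Rightarrow> bool" where
  "max_tracked T seeds e L \<longleftrightarrow> finite L \<and>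
     (L \<noteq> {} \<longrightarrow> (\<exists>e0. (Max L, e0) \<in> seeds \<and> same_strip T e0 e))"

definition labels_max_tracked ::
    "tile set \<Rightarrow> (nat \<times> edge) set \<Rightarrow> (edge \<Rightarrow> label option) \<Rightarrow> bool" where
  "labels_max_tracked T seeds lab \<longleftrightarrow> (\<forall>e L. lab e = Some L \<longrightarrow> max_tracked T seeds e L)"

lemma max_tracked_empty [simp]: "max_tracked T seeds e {}"
  by (simp add: max_tracked_def)

lemma max_tracked_strip_adj:
  assumes "max_tracked T seeds e L" and "strip_adj T e e'"
  shows "max_tracked T seeds e' L"
  using assms unfolding max_tracked_def same_strip_def
  by (meson rtranclp.rtrancl_into_rtrancl)

lemma Max_Un_lsucc:
  assumes "finite E" "finite S" "lsucc E S"
  shows "Max (E \<union> S) = Max E"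
proof -
  have ne: "E \<noteq> {}" "S \<noteq> {}" and "Max S < Min E"
    using assms(3) by (auto simp: lsucc_def)
  moreover have "Min E \<le> Max E" using assms(1) ne(1) by simp
  ultimately show ?thesis using assms(1,2) by (simp add: Max_Un)
qed

lemma max_tracked_Un_lsucc:
  assumes "max_tracked T seeds e E" and "finite S" and "lsucc E S"
  shows "max_tracked T seeds e (E \<union> S)"
  using assms Max_Un_lsucc[of E S] by (auto simp: max_tracked_def lsucc_def)

lemma labels_max_tracked_upd:
  assumes "labels_max_tracked T seeds lab"
    and "max_tracked T seeds e1 L1" and "max_tracked T seeds e2 L2"
  shows "labels_max_tracked T seeds (lab(e1 := Some L1, e2 := Some L2))"
  using assms by (auto simp: labels_max_tracked_def)

lemma strip_adj_east_west: "t \<in> T \<Longrightarrow> strip_adj T (east_edge t) (west_edge t)"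
  unfolding strip_adj_def by blast

lemma strip_adj_south_north: "t \<in> T \<Longrightarrow> strip_adj T (south_edge t) (north_edge t)"
  unfolding strip_adj_def by blast

lemma fe_step_labels_max_tracked:
  assumes inv: "labels_max_tracked T seeds lab" and "fe_step T lab lab'"
  shows "labels_max_tracked T seeds lab'"
proof -
  obtain t E S where t: "t \<in> T"
    and east: "lab (east_edge t) = Some E" and south: "lab (south_edge t) = Some S"
    and lab': "lab' = (if lsucc E S \<and> snd (snd t) = dW
               then lab(west_edge t := Some (E \<union> S), north_edge t := Some {})
             else if lsucc S E \<and> fst (snd t) = dS
               then lab(north_edge t := Some (E \<union> S), west_edge t := Some {})
             else lab(west_edge t := Some E, north_edge t := Some S))"
    using \<open>fe_step T lab lab'\<close> unfolding fe_step_def by blast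
  have "max_tracked T seeds (east_edge t) E" "max_tracked T seeds (south_edge t) S"
    using inv east south unfolding labels_max_tracked_def by blast+
  then have west: "max_tracked T seeds (west_edge t) E"
    and north: "max_tracked T seeds (north_edge t) S"
    using max_tracked_strip_adj strip_adj_east_west[OF t] strip_adj_south_north[OF t]
    by blast+
  have fin: "finite E" "finite S"
    using west north by (simp_all add: max_tracked_def)
  have "max_tracked T seeds (west_edge t) (E \<union> S)" if "lsucc E S"
    using max_tracked_Un_lsucc[OF west fin(2) that] .
  moreover have "max_tracked T seeds (north_edge t) (E \<union> S)" if "lsucc S E"
    using max_tracked_Un_lsucc[OF north fin(1) that] by (simp add: Un_commute)
  ultimately show ?thesis
    unfolding lab' using inv west north by (simp add: labels_max_tracked_upd)
qed

lemma fe_steps_labels_max_tracked: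
  assumes "(fe_step T)\<^sup>*\<^sup>* lab lab'" and "labels_max_tracked T seeds lab"
  shows "labels_max_tracked T seeds lab'"
  using assms by induction (auto intro: fe_step_labels_max_tracked)

lemma init_lab_max_tracked:
  "labels_max_tracked T {(concat A ! i, path_edge (Xword A) i) | i. i < length (Xword A)}
     (init_lab A)"
  unfolding labels_max_tracked_def
proof (intro allI impI)
  fix e L assume "init_lab A e = Some L"
  from map_of_SomeD[OF this[unfolded init_lab_def]] obtain i where
    i: "i < length (Xword A)" "e = path_edge (Xword A) i" "L = {concat A ! i}"
    by auto
  then show "max_tracked T {(concat A ! i, path_edge (Xword A) i) | i. i < length (Xword A)} e L"
    unfolding max_tracked_def same_strip_def using i
    by (intro conjI impI exI[of _ e]) auto
qed

lemma length_Xword_assemblee: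
  assumes "assemblee (Suc n) s A"
  shows "length (Xword A) = n"
proof -
  have "distinct (concat A)" "set (concat A) = {1..Suc n}"
    using assms unfolding assemblee_def by auto
  then have "length (concat A) = Suc n"
    by (metis card_atLeastAtMost diff_Suc_1 distinct_card)
  then show ?thesis by (simp add: Xword_def Let_def)
qed

theorem lemma3p3:
  fixes n r :: nat and A :: "nat list list" and T :: "tile set"
    and lab :: "edge \<Rightarrow> label option" and e :: edge and L :: label
  assumes "r \<le> n"
    and "assemblee (Suc n) (Suc r) A"
    and "is_tiling (Xword A) T"
    and "(fe_step T)\<^sup>*\<^sup>* (init_lab A) lab"
    and "lab e = Some L" and "L \<noteq> {}"
  shows "\<exists>i < n. concat A ! i = Max L \<and> same_strip T (path_edge (Xword A) i) e"
proof -
  let ?seeds = "{(concat A ! i, path_edge (Xword A) i) | i. i < length (Xword A)}"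
  have "labels_max_tracked T ?seeds lab"
    using fe_steps_labels_max_tracked[OF assms(4) init_lab_max_tracked] .
  then have "max_tracked T ?seeds e L"
    using assms(5) unfolding labels_max_tracked_def by blast
  then show ?thesis
    using assms(6) length_Xword_assemblee[OF assms(2)] by (auto simp: max_tracked_def)
qed

end
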